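(* Let $G$ be a word hyperbolic group and $0\to\mathbb Z\xrightarrow{\iota}E\xrightarrow{\pi}G\to1$ a central extension, $X$ a finite set mapping onto a symmetric generating set of $E$ (evaluation $w\mapsto\overline w\in E$). Let $C>0$ be an integer such that for every $g\in G$ the maximum $\max\{\overline w\,\iota(-C\,\mathrm{len}(w)): w\in X^*,\ \pi(\overline w)=g\}$ exists in the ordered fibre $\pi^{-1}(g)$, and such that for some $\lambda>0$ every word achieving this maximum is a $(\lambda,0)$-quasigeodesic in the Cayley graph of $G$ with respect to $\pi(\overline X)$; let $\rho(g)$ denote this maximum. Then for every constant $k$ there is a constant $K(k)$ such that whenever $g,h\in G$ and $g$ lies within distance $k$ of a geodesic path in the Cayley graph of $G$ from $1$ to $gh$, we have $d_E(\rho(gh),\rho(g)\rho(h))\le K(k)$.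
   Context: Order on a fibre: $h_1\le h_2$ iff $h_2h_1^{-1}=\iota(n)$ with $n\ge0$. $d_E$ is the word metric on $E$ with respect to the generating set $\overline X$. *)

theory Defs
  imports "HOL-Algebra.Algebra"
begin

definition word_prod :: "('a, 'b) monoid_scheme \<Rightarrow> 'a list \<Rightarrow> 'a" where
  "word_prod G ws = foldr (\<lambda>a b. a \<otimes>\<^bsub>G\<^esub> b) ws \<one>\<^bsub>G\<^esub>"

definition word_length :: "('a, 'b) monoid_scheme \<Rightarrow> 'a set \<Rightarrow> 'a \<Rightarrow> nat" where
  "word_length G S g = (LEAST n. \<exists>ws. set ws \<subseteq> S \<and> length ws = n \<and> word_prod G ws = g)"

definition word_dist :: "('a, 'b) monoid_scheme \<Rightarrow> 'a set \<Rightarrow> 'a \<Rightarrow> 'a \<Rightarrow> nat" where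
  "word_dist G S x y = word_length G S (inv\<^bsub>G\<^esub> x \<otimes>\<^bsub>G\<^esub> y)"

definition gromov_product :: "('a, 'b) monoid_scheme \<Rightarrow> 'a set \<Rightarrow> 'a \<Rightarrow> 'a \<Rightarrow> 'a \<Rightarrow> real" where
  "gromov_product G S w x y =
     (real (word_dist G S w x) + real (word_dist G S w y) - real (word_dist G S x y)) / 2"

definition finite_sym_gen_set :: "('a, 'b) monoid_scheme \<Rightarrow> 'a set \<Rightarrow> bool" where
  "finite_sym_gen_set G S \<longleftrightarrow> finite S \<and> S \<subseteq> carrier G \<and> (\<forall>s\<in>S. inv\<^bsub>G\<^esub> s \<in> S)
     \<and> generate G S = carrier G"

definition word_hyperbolic :: "('a, 'b) monoid_scheme \<Rightarrow> bool" where
  "word_hyperbolic G \<longleftrightarrow> group G \<and> (\<exists>S. finite_sym_gen_set G S \<and> (\<exists>\<delta>::real.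
     \<forall>w\<in>carrier G. \<forall>x\<in>carrier G. \<forall>y\<in>carrier G. \<forall>z\<in>carrier G.
       gromov_product G S w x z \<ge> min (gromov_product G S w x y) (gromov_product G S w y z) - \<delta>))"

definition central_extension ::
  "('g, 'a) monoid_scheme \<Rightarrow> ('e, 'b) monoid_scheme \<Rightarrow> (int \<Rightarrow> 'e) \<Rightarrow> ('e \<Rightarrow> 'g) \<Rightarrow> bool" where
  "central_extension G E \<iota> \<pi> \<longleftrightarrow> group G \<and> group E
     \<and> range \<iota> \<subseteq> carrier E \<and> (\<forall>a b. \<iota> (a + b) = \<iota> a \<otimes>\<^bsub>E\<^esub> \<iota> b) \<and> inj \<iota>
     \<and> (\<forall>n. \<forall>x\<in>carrier E. \<iota> n \<otimes>\<^bsub>E\<^esub> x = x \<otimes>\<^bsub>E\<^esub> \<iota> n)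
     \<and> \<pi> \<in> hom E G \<and> \<pi> ` carrier E = carrier G
     \<and> {x \<in> carrier E. \<pi> x = \<one>\<^bsub>G\<^esub>} = range \<iota>"

definition fibre_le :: "('e, 'b) monoid_scheme \<Rightarrow> (int \<Rightarrow> 'e) \<Rightarrow> 'e \<Rightarrow> 'e \<Rightarrow> bool" where
  "fibre_le E \<iota> h1 h2 \<longleftrightarrow> (\<exists>n\<ge>0. h2 \<otimes>\<^bsub>E\<^esub> inv\<^bsub>E\<^esub> h1 = \<iota> n)"

definition is_fibre_max :: "('e, 'b) monoid_scheme \<Rightarrow> (int \<Rightarrow> 'e) \<Rightarrow> 'e set \<Rightarrow> 'e \<Rightarrow> bool" where
  "is_fibre_max E \<iota> M m \<longleftrightarrow> m \<in> M \<and> (\<forall>x\<in>M. fibre_le E \<iota> x m)"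

definition penalized :: "('e, 'b) monoid_scheme \<Rightarrow> (int \<Rightarrow> 'e) \<Rightarrow> int \<Rightarrow> ('x \<Rightarrow> 'e) \<Rightarrow> 'x list \<Rightarrow> 'e" where
  "penalized E \<iota> C ev w = word_prod E (map ev w) \<otimes>\<^bsub>E\<^esub> \<iota> (- C * int (length w))"

definition candidates ::
  "('e, 'b) monoid_scheme \<Rightarrow> (int \<Rightarrow> 'e) \<Rightarrow> ('e \<Rightarrow> 'g) \<Rightarrow> int \<Rightarrow> 'x set \<Rightarrow> ('x \<Rightarrow> 'e) \<Rightarrow> 'g \<Rightarrow> 'e set" where
  "candidates E \<iota> \<pi> C A ev g =
     penalized E \<iota> C ev ` {w. set w \<subseteq> A \<and> \<pi> (word_prod E (map ev w)) = g}"

definition quasigeodesic :: "('g, 'a) monoid_scheme \<Rightarrow> 'g set \<Rightarrow> real \<Rightarrow> (nat \<Rightarrow> 'g) \<Rightarrow> nat \<Rightarrow> bool" where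
  "quasigeodesic G S lam p n \<longleftrightarrow> (\<forall>i\<le>n. \<forall>j\<le>n.
     \<bar>real i - real j\<bar> / lam \<le> real (word_dist G S (p i) (p j))
     \<and> real (word_dist G S (p i) (p j)) \<le> lam * \<bar>real i - real j\<bar>)"

definition word_path :: "('e, 'b) monoid_scheme \<Rightarrow> ('e \<Rightarrow> 'g) \<Rightarrow> ('x \<Rightarrow> 'e) \<Rightarrow> 'x list \<Rightarrow> nat \<Rightarrow> 'g" where
  "word_path E \<pi> ev w i = \<pi> (word_prod E (map ev (take i w)))"

definition geodesic_path :: "('g, 'a) monoid_scheme \<Rightarrow> 'g set \<Rightarrow> (nat \<Rightarrow> 'g) \<Rightarrow> nat \<Rightarrow> 'g \<Rightarrow> 'g \<Rightarrow> bool" where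
  "geodesic_path G S p n x y \<longleftrightarrow> p 0 = x \<and> p n = y \<and> n = word_dist G S x y
     \<and> (\<forall>i\<le>n. p i \<in> carrier G) \<and> (\<forall>i<n. word_dist G S (p i) (p (Suc i)) = 1)"

end

(*
  Let T be the image of the generators in G and let w be a maximal word for g h. By
  hypothesis the path traced by w in the Cayley graph of G is a quasigeodesic, so by the
  stability of quasigeodesics in the hyperbolic group G (Morse lemma) it passes within a
  uniform distance D of every point of a geodesic from 1 to g h; hence g is within k + D
  of some vertex of that path, say after the first j letters of w. Take a shortest word u
  from that vertex to g and a formal inverse u' of u. Cutting w after j letters and
  inserting u u' produces words for g and h whose penalized values multiply to that of w
  times iota(-2C|u|). Since concatenating maximal words for g and h gives a candidate for
  g h, rho(g) rho(h) is squeezed between rho(g h) iota(-2C|u|) and rho(g h) in the fibre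
  order, so rho(g h)^-1 rho(g) rho(h) = iota(N) with |N| <= 2C(k + D), and its word length
  in E is at most 2C(k + D) times that of iota(-1).
*)

theory Submission
  imports Defs Complex_Main
begin

section \<open>Words and word metrics\<close>

lemma word_prod_Nil [simp]: "word_prod G [] = \<one>\<^bsub>G\<^esub>"
  by (simp add: word_prod_def)

lemma word_prod_Cons [simp]: "word_prod G (x # xs) = x \<otimes>\<^bsub>G\<^esub> word_prod G xs"
  by (simp add: word_prod_def)

lemma (in monoid) word_prod_closed: "set xs \<subseteq> carrier G \<Longrightarrow> word_prod G xs \<in> carrier G"
  by (induction xs) auto

lemma (in monoid) word_prod_append:
  "set xs \<subseteq> carrier G \<Longrightarrow> set ys \<subseteq> carrier G \<Longrightarrow>
   word_prod G (xs @ ys) = word_prod G xs \<otimes> word_prod G ys"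
  by (induction xs) (auto simp: m_assoc word_prod_closed)

lemma (in group) word_prod_rev_inv:
  "set xs \<subseteq> carrier G \<Longrightarrow> word_prod G (rev (map (m_inv G) xs)) = inv (word_prod G xs)"
proof (induction xs)
  case (Cons x xs)
  then have "word_prod G (rev (map (m_inv G) (x # xs)))
      = inv (word_prod G xs) \<otimes> word_prod G [inv x]"
    by (simp del: word_prod_Cons) (subst word_prod_append, auto)
  then show ?case using Cons.prems by (simp add: inv_mult_group word_prod_closed)
qed simp

lemma (in group_hom) word_prod_hom:
  "set xs \<subseteq> carrier G \<Longrightarrow> h (word_prod G xs) = word_prod H (map h xs)"
  by (induction xs) (auto simp: G.word_prod_closed)

definition sym_word_gen :: "('a, 'b) monoid_scheme \<Rightarrow> 'a set \<Rightarrow> bool" where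
  "sym_word_gen G S \<longleftrightarrow> S \<subseteq> carrier G \<and> (\<forall>s\<in>S. inv\<^bsub>G\<^esub> s \<in> S)
     \<and> (\<forall>g\<in>carrier G. \<exists>ws. set ws \<subseteq> S \<and> word_prod G ws = g)"

lemma (in group) sym_word_gen_if_generate:
  assumes "S \<subseteq> carrier G" "\<forall>s\<in>S. inv s \<in> S" "generate G S = carrier G"
  shows "sym_word_gen G S"
proof -
  have "\<exists>ws. set ws \<subseteq> S \<and> word_prod G ws = g" if "g \<in> generate G S" for g
    using that
  proof (induction rule: generate.induct)
    case one
    show ?case by (intro exI[of _ "[]"]) auto
  next
    case (incl h)
    then show ?case using assms by (intro exI[of _ "[h]"]) auto
  next
    case (inv h)
    then show ?case using assms by (intro exI[of _ "[inv h]"]) auto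
  next
    case (eng h1 h2)
    then obtain ws1 ws2 where "set ws1 \<subseteq> S" "word_prod G ws1 = h1" "set ws2 \<subseteq> S" "word_prod G ws2 = h2"
      by blast
    then show ?case using assms(1)
      by (intro exI[of _ "ws1 @ ws2"]) (auto simp: word_prod_append)
  qed
  then show ?thesis using assms unfolding sym_word_gen_def by auto
qed

context group
begin

lemma word_length_le: "set ws \<subseteq> S \<Longrightarrow> word_prod G ws = g \<Longrightarrow> word_length G S g \<le> length ws"
  unfolding word_length_def by (rule Least_le) auto

lemma word_length_one [simp]: "word_length G S \<one> = 0"
  using word_length_le[of "[]" S \<one>] by simp

lemma word_length_witness:
  assumes "sym_word_gen G S" "g \<in> carrier G"
  obtains ws where "set ws \<subseteq> S" "length ws = word_length G S g" "word_prod G ws = g"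
proof -
  have "\<exists>n ws. set ws \<subseteq> S \<and> length ws = n \<and> word_prod G ws = g"
    using assms unfolding sym_word_gen_def by blast
  from LeastI_ex[OF this] show ?thesis using that unfolding word_length_def by blast
qed

lemma word_length_mult:
  assumes "sym_word_gen G S" "a \<in> carrier G" "b \<in> carrier G"
  shows "word_length G S (a \<otimes> b) \<le> word_length G S a + word_length G S b"
proof -
  obtain u where u: "set u \<subseteq> S" "length u = word_length G S a" "word_prod G u = a"
    using word_length_witness assms by metis
  obtain v where v: "set v \<subseteq> S" "length v = word_length G S b" "word_prod G v = b"
    using word_length_witness assms by metis
  have "word_prod G (u @ v) = a \<otimes> b"
    using u v assms(1) unfolding sym_word_gen_def by (auto simp: word_prod_append)
  then show ?thesis using word_length_le[of "u @ v" S] u v by simp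
qed

lemma word_length_inv:
  assumes "sym_word_gen G S" "a \<in> carrier G"
  shows "word_length G S (inv a) \<le> word_length G S a"
proof -
  obtain u where u: "set u \<subseteq> S" "length u = word_length G S a" "word_prod G u = a"
    using word_length_witness assms by metis
  have S: "S \<subseteq> carrier G" "\<forall>s\<in>S. inv s \<in> S" using assms unfolding sym_word_gen_def by auto
  have "set (rev (map (m_inv G) u)) \<subseteq> S" using u S by auto
  moreover have "word_prod G (rev (map (m_inv G) u)) = inv a"
    using u S by (auto simp: word_prod_rev_inv)
  ultimately have "word_length G S (inv a) \<le> length (rev (map (m_inv G) u))"
    by (rule word_length_le)
  then show ?thesis using u by simp
qed

end

section \<open>Geodesics and quasigeodesics in integer metric spaces\<close>

locale nat_metric =
  fixes V :: "'a set" and d :: "'a \<Rightarrow> 'a \<Rightarrow> nat"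
  assumes d_sym: "x \<in> V \<Longrightarrow> y \<in> V \<Longrightarrow> d x y = d y x"
    and d_triangle: "x \<in> V \<Longrightarrow> y \<in> V \<Longrightarrow> z \<in> V \<Longrightarrow> d x z \<le> d x y + d y z"
    and d_self [simp]: "x \<in> V \<Longrightarrow> d x x = 0"

definition metric_geodesic :: "('a \<Rightarrow> 'a \<Rightarrow> nat) \<Rightarrow> (nat \<Rightarrow> 'a) \<Rightarrow> nat \<Rightarrow> bool" where
  "metric_geodesic d c N \<longleftrightarrow> (\<forall>i j. i \<le> j \<longrightarrow> j \<le> N \<longrightarrow> d (c i) (c j) = j - i)"

definition metric_quasigeodesic :: "('a \<Rightarrow> 'a \<Rightarrow> nat) \<Rightarrow> real \<Rightarrow> (nat \<Rightarrow> 'a) \<Rightarrow> nat \<Rightarrow> bool" where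
  "metric_quasigeodesic d lam p n \<longleftrightarrow> (\<forall>i\<le>n. \<forall>j\<le>n.
     \<bar>real i - real j\<bar> / lam \<le> real (d (p i) (p j))
     \<and> real (d (p i) (p j)) \<le> lam * \<bar>real i - real j\<bar>)"

lemma quasigeodesic_eq_metric_quasigeodesic:
  "quasigeodesic G S = metric_quasigeodesic (word_dist G S)"
  by (simp add: fun_eq_iff quasigeodesic_def metric_quasigeodesic_def)

lemma metric_quasigeodesicD:
  assumes "metric_quasigeodesic d lam p n" "lam > 0" "i \<le> j" "j \<le> n"
  shows "real (j - i) \<le> lam * real (d (p i) (p j))" "real (d (p i) (p j)) \<le> lam * real (j - i)"
proof -
  have "i \<le> n" using assms(3,4) by simp
  note qg = assms(1)[unfolded metric_quasigeodesic_def, rule_format, OF this assms(4)]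
  have "\<bar>real i - real j\<bar> = real (j - i)" using assms(3) by simp
  then show "real (j - i) \<le> lam * real (d (p i) (p j))"
    "real (d (p i) (p j)) \<le> lam * real (j - i)"
    using assms(2) qg by (simp_all add: pos_divide_le_eq mult.commute)
qed

lemma metric_quasigeodesic_mono:
  assumes "metric_quasigeodesic d lam p n" "0 < lam" "lam \<le> lam'"
  shows "metric_quasigeodesic d lam' p n"
  unfolding metric_quasigeodesic_def
proof (intro allI impI conjI)
  fix i j assume "i \<le> n" "j \<le> n"
  then have "\<bar>real i - real j\<bar> / lam \<le> real (d (p i) (p j))"
    and "real (d (p i) (p j)) \<le> lam * \<bar>real i - real j\<bar>"
    using assms(1) unfolding metric_quasigeodesic_def by auto
  moreover have "\<bar>real i - real j\<bar> / lam' \<le> \<bar>real i - real j\<bar> / lam"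
    and "lam * \<bar>real i - real j\<bar> \<le> lam' * \<bar>real i - real j\<bar>"
    using assms(2,3) by (auto intro: divide_left_mono mult_right_mono)
  ultimately show "\<bar>real i - real j\<bar> / lam' \<le> real (d (p i) (p j))"
    and "real (d (p i) (p j)) \<le> lam' * \<bar>real i - real j\<bar>" by linarith+
qed

lemma metric_quasigeodesic_bilipschitz:
  assumes "metric_quasigeodesic d lam p n" "lam > 0" "M > 0"
    and lip: "\<And>i j. i \<le> n \<Longrightarrow> j \<le> n \<Longrightarrow> real (d (p i) (p j)) \<le> M * real (d' (p i) (p j))
                 \<and> real (d' (p i) (p j)) \<le> M * real (d (p i) (p j))"
  shows "metric_quasigeodesic d' (lam * M) p n"
  unfolding metric_quasigeodesic_def
proof (intro allI impI conjI)
  fix i j assume ij: "i \<le> n" "j \<le> n"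
  define t where "t = \<bar>real i - real j\<bar>"
  have qg: "t / lam \<le> real (d (p i) (p j))" "real (d (p i) (p j)) \<le> lam * t"
    using assms(1) ij unfolding metric_quasigeodesic_def t_def by auto
  have "t / (lam * M) = (t / lam) / M" by simp
  also have "\<dots> \<le> real (d (p i) (p j)) / M" using qg(1) assms(3) by (intro divide_right_mono) simp_all
  also have "\<dots> \<le> real (d' (p i) (p j))" using lip[OF ij] assms(3) by (simp add: pos_divide_le_eq mult.commute)
  finally show "t / (lam * M) \<le> real (d' (p i) (p j))" .
  have "real (d' (p i) (p j)) \<le> M * real (d (p i) (p j))" using lip[OF ij] by simp
  also have "\<dots> \<le> M * (lam * t)" using qg(2) assms(3) by (intro mult_left_mono) simp_all
  finally show "real (d' (p i) (p j)) \<le> lam * M * t" by (simp add: ac_simps)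
qed

context nat_metric
begin

lemma geodesic_if_unit_steps:
  assumes V: "\<forall>i\<le>n. p i \<in> V" and steps: "\<forall>i<n. d (p i) (p (Suc i)) \<le> 1"
    and long: "n \<le> d (p 0) (p n)"
  shows "metric_geodesic d p n"
proof -
  have short: "d (p i) (p (i + m)) \<le> m" if "i + m \<le> n" for i m
    using that
  proof (induction m)
    case (Suc m)
    have "d (p i) (p (i + Suc m)) \<le> d (p i) (p (i + m)) + d (p (i + m)) (p (Suc (i + m)))"
      using d_triangle V Suc.prems by simp
    moreover have "d (p (i + m)) (p (Suc (i + m))) \<le> 1" using steps Suc.prems by simp
    ultimately show ?case using Suc by simp
  qed (use V in simp)
  show ?thesis unfolding metric_geodesic_def
  proof (intro allI impI)
    fix i j assume ij: "i \<le> j" "j \<le> n"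
    have "d (p 0) (p n) \<le> d (p 0) (p i) + d (p i) (p j) + d (p j) (p n)"
      using d_triangle[of "p 0" "p i" "p j"] d_triangle[of "p 0" "p j" "p n"] V ij by fastforce
    then show "d (p i) (p j) = j - i"
      using short[of 0 i] short[of i "j - i"] short[of j "n - j"] long ij by simp
  qed
qed

lemma geodesic_imp_quasigeodesic:
  assumes "metric_geodesic d c N" "\<forall>t\<le>N. c t \<in> V"
  shows "metric_quasigeodesic d 1 c N"
  unfolding metric_quasigeodesic_def
proof (intro allI impI)
  fix i j assume ij: "i \<le> N" "j \<le> N"
  have "real (d (c i) (c j)) = \<bar>real i - real j\<bar>"
  proof (cases "i \<le> j")
    case True
    then show ?thesis using assms(1) ij unfolding metric_geodesic_def by simp
  next
    case False
    then have "d (c i) (c j) = d (c j) (c i)" using d_sym assms(2) ij by simp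
    then show ?thesis using False assms(1) ij unfolding metric_geodesic_def by simp
  qed
  then show "\<bar>real i - real j\<bar> / 1 \<le> real (d (c i) (c j)) \<and> real (d (c i) (c j)) \<le> 1 * \<bar>real i - real j\<bar>"
    by simp
qed

end

context group
begin

lemma word_metric: "sym_word_gen G S \<Longrightarrow> nat_metric (carrier G) (word_dist G S)"
proof
  fix x y z assume S: "sym_word_gen G S" and xyz: "x \<in> carrier G" "y \<in> carrier G" "z \<in> carrier G"
  show "word_dist G S x y = word_dist G S y x"
    using word_length_inv[OF S, of "inv x \<otimes> y"] word_length_inv[OF S, of "inv y \<otimes> x"] xyz
    unfolding word_dist_def by (simp add: inv_mult_group)
  have "inv x \<otimes> z = (inv x \<otimes> y) \<otimes> (inv y \<otimes> z)"
    using xyz by (simp add: m_assoc[symmetric]) (simp add: m_assoc)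
  then show "word_dist G S x z \<le> word_dist G S x y + word_dist G S y z"
    unfolding word_dist_def using word_length_mult[OF S] xyz by simp
  show "word_dist G S x x = 0" using xyz unfolding word_dist_def by simp
qed

lemma geodesic_path_imp_quasigeodesic:
  assumes S: "sym_word_gen G S" and p: "geodesic_path G S p n x y"
  shows "quasigeodesic G S 1 p n"
proof -
  interpret nat_metric "carrier G" "word_dist G S" by (rule word_metric[OF S])
  have "\<forall>i\<le>n. p i \<in> carrier G" using p unfolding geodesic_path_def by auto
  moreover have "metric_geodesic (word_dist G S) p n"
    using p unfolding geodesic_path_def by (intro geodesic_if_unit_steps) auto
  ultimately show ?thesis
    unfolding quasigeodesic_eq_metric_quasigeodesic by (intro geodesic_imp_quasigeodesic)
qed

lemma word_geodesic_exists:
  assumes S: "sym_word_gen G S" and xy: "x \<in> carrier G" "y \<in> carrier G"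
  obtains c where "c 0 = x" "c (word_dist G S x y) = y" "\<forall>t\<le>word_dist G S x y. c t \<in> carrier G"
    "metric_geodesic (word_dist G S) c (word_dist G S x y)"
proof -
  define n where "n = word_dist G S x y"
  obtain ws where ws: "set ws \<subseteq> S" "length ws = n" "word_prod G ws = inv x \<otimes> y"
    using word_length_witness[OF S, of "inv x \<otimes> y"] xy unfolding n_def word_dist_def by auto
  have wsC: "set ws \<subseteq> carrier G" using ws S unfolding sym_word_gen_def by auto
  then have takeC: "set (take i ws) \<subseteq> carrier G" for i by (meson order_trans set_take_subset)
  define c where "c i = x \<otimes> word_prod G (take i ws)" for i
  have cC: "c i \<in> carrier G" for i unfolding c_def using xy takeC by (simp add: word_prod_closed)
  have c0: "c 0 = x" and cn: "c n = y" using xy ws by (simp_all add: c_def m_assoc[symmetric])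
  have "word_dist G S (c i) (c (Suc i)) \<le> 1" if "i < n" for i
  proof -
    have "take (Suc i) ws = take i ws @ [ws ! i]" using that ws(2) by (simp add: take_Suc_conv_app_nth)
    moreover have wsi: "ws ! i \<in> carrier G" using wsC that ws(2) by (meson nth_mem subsetD)
    ultimately have "c (Suc i) = c i \<otimes> ws ! i"
      using xy takeC by (simp add: c_def word_prod_append word_prod_closed m_assoc)
    then have "inv (c i) \<otimes> c (Suc i) = word_prod G [ws ! i]"
      using cC wsi by (simp add: m_assoc[symmetric])
    moreover have "set [ws ! i] \<subseteq> S" using ws that by auto
    ultimately have "word_length G S (inv (c i) \<otimes> c (Suc i)) \<le> length [ws ! i]"
      using word_length_le by presburger
    then show ?thesis unfolding word_dist_def by simp
  qed
  moreover have "word_dist G S (c 0) (c n) = n" using c0 cn n_def by simp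
  ultimately have "metric_geodesic (word_dist G S) c n"
    by (intro nat_metric.geodesic_if_unit_steps[OF word_metric[OF S]]) (simp_all add: cC)
  then show ?thesis using that c0 cn cC unfolding n_def by blast
qed

lemma word_length_le_mult:
  assumes "sym_word_gen G S" "sym_word_gen G T" "\<forall>s\<in>S. word_length G T s \<le> a" "g \<in> carrier G"
  shows "word_length G T g \<le> a * word_length G S g"
proof -
  have SC: "S \<subseteq> carrier G" using assms(1) unfolding sym_word_gen_def by auto
  have "word_length G T (word_prod G ws) \<le> a * length ws" if "set ws \<subseteq> S" for ws
    using that
  proof (induction ws)
    case (Cons s ws)
    then have "word_length G T (word_prod G (s # ws))
        \<le> word_length G T s + word_length G T (word_prod G ws)"
      using SC by (simp, intro word_length_mult[OF assms(2)]) (auto intro: word_prod_closed)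
    then show ?case using Cons assms(3) by auto
  qed simp
  moreover obtain ws where "set ws \<subseteq> S" "length ws = word_length G S g" "word_prod G ws = g"
    using word_length_witness[OF assms(1,4)] by blast
  ultimately show ?thesis by metis
qed

lemma word_dist_bilipschitz:
  assumes "sym_word_gen G S" "finite S" "sym_word_gen G T" "finite T"
  obtains M :: real where "M \<ge> 1"
    "\<And>x y. x \<in> carrier G \<Longrightarrow> y \<in> carrier G \<Longrightarrow>
       real (word_dist G S x y) \<le> M * real (word_dist G T x y)
       \<and> real (word_dist G T x y) \<le> M * real (word_dist G S x y)"
proof
  define a where "a = Max (word_length G T ` S)"
  define b where "b = Max (word_length G S ` T)"
  show "1 \<le> real (a + b + 1)" by simp
  fix x y assume "x \<in> carrier G" "y \<in> carrier G"
  then have xy: "inv x \<otimes> y \<in> carrier G" by simp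
  have "word_dist G T x y \<le> a * word_dist G S x y" "word_dist G S x y \<le> b * word_dist G T x y"
    unfolding word_dist_def a_def b_def using assms xy by (auto intro!: word_length_le_mult)
  then have "real (word_dist G T x y) \<le> real a * real (word_dist G S x y)"
    "real (word_dist G S x y) \<le> real b * real (word_dist G T x y)"
    by (metis of_nat_le_iff of_nat_mult)+
  moreover have "real a \<le> real (a + b + 1)" "real b \<le> real (a + b + 1)" by simp_all
  ultimately show "real (word_dist G S x y) \<le> real (a + b + 1) * real (word_dist G T x y)
       \<and> real (word_dist G T x y) \<le> real (a + b + 1) * real (word_dist G S x y)"
    by (meson mult_right_mono of_nat_0_le_iff order_trans)
qed

end

section \<open>Stability of quasigeodesics in hyperbolic spaces\<close>

lemma le_log_imp_bounded:
  fixes \<alpha> \<beta> c :: real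
  assumes "\<beta> > 0" "c \<ge> 0"
  obtains B where "\<And>x. x \<ge> 1 \<Longrightarrow> x \<le> \<alpha> + c * log 2 (\<beta> * x) \<Longrightarrow> x \<le> B"
proof
  define a where "a = \<alpha> + c * log 2 \<beta>"
  define b where "b = 2 * c / ln 2"
  fix x :: real assume x: "x \<ge> 1" "x \<le> \<alpha> + c * log 2 (\<beta> * x)"
  have "ln x = 2 * ln (sqrt x)" using x by (simp add: ln_sqrt)
  also have "\<dots> \<le> 2 * sqrt x" using ln_le_minus_one[of "sqrt x"] x by simp
  finally have "log 2 x \<le> 2 * sqrt x / ln 2" by (simp add: log_def divide_right_mono)
  then have "c * log 2 x \<le> c * (2 * sqrt x / ln 2)" using assms(2) by (rule mult_left_mono)
  then have "c * log 2 x \<le> b * sqrt x" unfolding b_def by (simp add: ac_simps)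
  then have x_le: "x \<le> a + b * sqrt x"
    using x assms(1) unfolding a_def by (simp add: log_mult algebra_simps)
  show "x \<le> max (4 * b\<^sup>2) (2 * a)"
  proof (cases "sqrt x \<le> 2 * b")
    case True
    then have "(sqrt x)\<^sup>2 \<le> (2 * b)\<^sup>2" using x by (intro power_mono) auto
    then show ?thesis using x by (simp add: power_mult_distrib)
  next
    case False
    then have "b * sqrt x \<le> (sqrt x / 2) * sqrt x" using x by (intro mult_right_mono) auto
    also have "\<dots> = x / 2" using x by simp
    finally have "b * sqrt x \<le> x / 2" .
    then show ?thesis using x_le by simp
  qed
qed

lemma max_min_attained:
  fixes f :: "nat \<Rightarrow> nat \<Rightarrow> nat"
  obtains D t0 where "t0 \<le> N" "\<forall>t\<le>N. \<exists>j\<le>n. f t j \<le> D" "\<forall>j\<le>n. D \<le> f t0 j"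
proof -
  define m where "m t = Min (f t ` {..n})" for t
  have m: "\<exists>j\<le>n. m t = f t j" "\<forall>j\<le>n. m t \<le> f t j" for t
  proof -
    have "m t \<in> f t ` {..n}" unfolding m_def by (intro Min_in) auto
    then show "\<exists>j\<le>n. m t = f t j" by auto
    show "\<forall>j\<le>n. m t \<le> f t j" unfolding m_def by simp
  qed
  have "Max (m ` {..N}) \<in> m ` {..N}" by (intro Max_in) auto
  then obtain t0 where t0: "t0 \<le> N" "m t0 = Max (m ` {..N})" by (metis atMost_iff imageE)
  have "\<forall>t\<le>N. \<exists>j\<le>n. f t j \<le> Max (m ` {..N})"
  proof (intro allI impI)
    fix t assume "t \<le> N"
    then have "m t \<le> Max (m ` {..N})" by (intro Max_ge) auto
    then show "\<exists>j\<le>n. f t j \<le> Max (m ` {..N})" using m(1)[of t] by auto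
  qed
  moreover have "\<forall>j\<le>n. Max (m ` {..N}) \<le> f t0 j" using m(2)[of t0] t0(2) by simp
  ultimately show ?thesis using that t0(1) by blast
qed

definition gromov_prod :: "('a \<Rightarrow> 'a \<Rightarrow> nat) \<Rightarrow> 'a \<Rightarrow> 'a \<Rightarrow> 'a \<Rightarrow> real" where
  "gromov_prod d w x y = (real (d w x) + real (d w y) - real (d x y)) / 2"

locale hyperbolic_space = nat_metric +
  fixes \<delta> :: real
  assumes delta_nonneg: "\<delta> \<ge> 0"
    and four_point: "w \<in> V \<Longrightarrow> x \<in> V \<Longrightarrow> y \<in> V \<Longrightarrow> z \<in> V \<Longrightarrow>
       min (gromov_prod d w x y) (gromov_prod d w y z) - \<delta> \<le> gromov_prod d w x z"
    and geodesic_exists: "x \<in> V \<Longrightarrow> y \<in> V \<Longrightarrow>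
       \<exists>c. c 0 = x \<and> c (d x y) = y \<and> (\<forall>t\<le>d x y. c t \<in> V) \<and> metric_geodesic d c (d x y)"
begin

lemma gromov_prod_commute: "x \<in> V \<Longrightarrow> y \<in> V \<Longrightarrow> gromov_prod d w x y = gromov_prod d w y x"
  unfolding gromov_prod_def using d_sym by simp

lemma gromov_prod_self: "w \<in> V \<Longrightarrow> x \<in> V \<Longrightarrow> gromov_prod d w x x = real (d w x)"
  unfolding gromov_prod_def by simp

lemma gromov_prod_ge:
  assumes "w \<in> V" "x \<in> V" "y \<in> V"
  shows "real (d w x) - real (d x y) \<le> gromov_prod d w x y"
  using d_triangle[of w y x] d_sym[of y x] assms unfolding gromov_prod_def by simp

lemma gromov_prod_four_points:
  assumes "w \<in> V" "x \<in> V" "y \<in> V" "y' \<in> V" "z \<in> V"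
  shows "min (min (gromov_prod d w x y) (gromov_prod d w y y')) (gromov_prod d w y' z) - 2 * \<delta>
    \<le> gromov_prod d w x z"
  using four_point[OF assms(1,2,3,5)] four_point[OF assms(1,3,4,5)] delta_nonneg
  by (smt (verit))

lemma gromov_prod_chain:
  assumes "\<forall>i\<le>N. a i \<in> V" "w \<in> V" "\<forall>i<N. m \<le> gromov_prod d w (a i) (a (Suc i))"
    "1 \<le> N" "N \<le> 2 ^ k"
  shows "m - k * \<delta> \<le> gromov_prod d w (a 0) (a N)"
  using assms
proof (induction k arbitrary: a N)
  case (Suc k)
  show ?case
  proof (cases "N = 1")
    case True
    moreover have "0 \<le> (1 + real k) * \<delta>" using delta_nonneg by simp
    ultimately show ?thesis using Suc.prems by simp
  next
    case False
    define h where "h = N div 2"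
    have h: "1 \<le> h" "h \<le> 2 ^ k" "1 \<le> N - h" "N - h \<le> 2 ^ k" "h < N"
      using False Suc.prems(4,5) unfolding h_def by auto
    have "m - k * \<delta> \<le> gromov_prod d w (a 0) (a h)"
      using Suc.IH[of h a] Suc.prems h by auto
    moreover have "m - k * \<delta> \<le> gromov_prod d w (a h) (a N)"
      using Suc.IH[of "N - h" "\<lambda>i. a (h + i)"] Suc.prems h by auto
    moreover have "min (gromov_prod d w (a 0) (a h)) (gromov_prod d w (a h) (a N)) - \<delta>
        \<le> gromov_prod d w (a 0) (a N)"
      using four_point Suc.prems h by simp
    ultimately show ?thesis by (simp add: algebra_simps)
  qed
qed simp

lemma gromov_prod_chain_log:
  assumes "\<forall>i\<le>N. a i \<in> V" "w \<in> V" "\<forall>i<N. m \<le> gromov_prod d w (a i) (a (Suc i))" "1 \<le> N"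
  shows "m - \<delta> * (log 2 N + 1) \<le> gromov_prod d w (a 0) (a N)"
proof -
  define k where "k = nat \<lceil>log 2 N\<rceil>"
  have log_N: "0 \<le> log 2 N" using assms(4) by simp
  have "real N = 2 powr (log 2 N)" using assms(4) by simp
  also have "\<dots> \<le> 2 powr k" unfolding k_def using log_N by (intro powr_mono) auto
  finally have "N \<le> 2 ^ k" by (simp add: powr_realpow flip: of_nat_le_iff)
  then have "m - k * \<delta> \<le> gromov_prod d w (a 0) (a N)"
    using gromov_prod_chain assms by blast
  moreover have "k * \<delta> \<le> (log 2 N + 1) * \<delta>"
    unfolding k_def using log_N delta_nonneg by (intro mult_right_mono) linarith+
  ultimately show ?thesis by (simp add: mult.commute)
qed

lemma far_step_gromov_prod:
  assumes L: "L \<ge> 1" and r: "metric_quasigeodesic d L r n" "\<forall>j\<le>n. r j \<in> V"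
    and p: "p \<in> V" "\<forall>j\<le>n. D \<le> d p (r j)" and k: "Suc k \<le> n"
  shows "real D - L \<le> gromov_prod d p (r k) (r (Suc k))"
proof -
  have "real (d (r k) (r (Suc k))) \<le> L"
    using metric_quasigeodesicD(2)[OF r(1), of k "Suc k"] L k by simp
  moreover have "real (d p (r k)) - real (d (r k) (r (Suc k))) \<le> gromov_prod d p (r k) (r (Suc k))"
    using k p(1) r(2) by (intro gromov_prod_ge) simp_all
  moreover have "D \<le> d p (r k)" using p(2) k by simp
  ultimately show ?thesis by linarith
qed

lemma quasigeodesic_far_gromov_prod_ordered:
  assumes L: "L \<ge> 1" and r: "metric_quasigeodesic d L r n" "\<forall>j\<le>n. r j \<in> V"
    and p: "p \<in> V" "\<forall>j\<le>n. D \<le> d p (r j)" and D: "1 \<le> D"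
    and ij: "i \<le> j" "j \<le> n" "d (r i) (r j) \<le> 6 * D"
  shows "real D - L - \<delta> * (log 2 (6 * L * D) + 1) \<le> gromov_prod d p (r i) (r j)"
proof (cases "i = j")
  case True
  have "1 \<le> 6 * L * D" using L D mult_mono[of 1 "6 * L" 1 "real D"] by simp
  then have "0 \<le> \<delta> * (log 2 (6 * L * D) + 1)" using delta_nonneg by simp
  moreover have "D \<le> d p (r i)" using p ij by simp
  moreover have "gromov_prod d p (r i) (r j) = d p (r i)" using True gromov_prod_self p(1) r(2) ij by simp
  ultimately show ?thesis using L by linarith
next
  case False
  have "real D - L - \<delta> * (log 2 (j - i) + 1) \<le> gromov_prod d p (r i) (r j)"
    using gromov_prod_chain_log[of "j - i" "\<lambda>k. r (i + k)" p "real D - L"]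
      far_step_gromov_prod[OF L r p] p(1) r(2) ij False by simp
  moreover have "real (j - i) \<le> 6 * L * D"
  proof -
    have "real (j - i) \<le> L * d (r i) (r j)" using metric_quasigeodesicD(1)[OF r(1)] L ij by simp
    also have "\<dots> \<le> L * (6 * D)" using ij L by (intro mult_left_mono) simp_all
    finally show ?thesis by simp
  qed
  then have "\<delta> * (log 2 (j - i) + 1) \<le> \<delta> * (log 2 (6 * L * D) + 1)"
    using False ij delta_nonneg by (intro mult_left_mono) simp_all
  ultimately show ?thesis by linarith
qed

lemma quasigeodesic_far_gromov_prod:
  assumes L: "L \<ge> 1" and r: "metric_quasigeodesic d L r n" "\<forall>j\<le>n. r j \<in> V"
    and p: "p \<in> V" "\<forall>j\<le>n. D \<le> d p (r j)" and D: "1 \<le> D"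
    and j: "j1 \<le> n" "j2 \<le> n" "d (r j1) (r j2) \<le> 6 * D"
  shows "real D - L - \<delta> * (log 2 (6 * L * D) + 1) \<le> gromov_prod d p (r j1) (r j2)"
proof (cases "j1 \<le> j2")
  case False
  then show ?thesis
    using quasigeodesic_far_gromov_prod_ordered[OF L r p D, of j2 j1] j r d_sym gromov_prod_commute
    by simp
qed (use quasigeodesic_far_gromov_prod_ordered[OF L r p D] j in simp)

lemma near_point_gromov_witness:
  assumes p: "p \<in> V" and x: "x \<in> V" and r: "\<forall>j\<le>n. r j \<in> V" "\<forall>j\<le>n. D \<le> d p (r j)"
    and near: "\<exists>j\<le>n. d x (r j) \<le> D" and x_pos: "d p x = 2 * D \<or> (\<exists>j\<le>n. x = r j)"
  obtains j where "j \<le> n" "d x (r j) \<le> D" "D \<le> gromov_prod d p x (r j)"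
  using x_pos
proof
  assume "d p x = 2 * D"
  moreover obtain j where "j \<le> n" "d x (r j) \<le> D" using near by blast
  moreover have "real (d p x) - real (d x (r j)) \<le> gromov_prod d p x (r j)"
    using gromov_prod_ge p x r calculation(2) by simp
  ultimately show thesis using that by simp
next
  assume "\<exists>j\<le>n. x = r j"
  then obtain j where "j \<le> n" "x = r j" by blast
  then show thesis using that[of j] gromov_prod_self p x r by simp
qed

text \<open>The core of the Morse lemma. Let \<open>p = c t0\<close> be a point of the geodesic at maximal
  distance \<open>D\<close> from the quasigeodesic \<open>r\<close>. The points of \<open>c\<close> at distance \<open>2D\<close> on either side
  of \<open>p\<close> have Gromov product at least \<open>D\<close> (based at \<open>p\<close>) with nearby points of \<open>r\<close>. The
  stretch of \<open>r\<close> between those two points of \<open>r\<close> has length \<open>O(L D)\<close> and stays at distance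
  at least \<open>D\<close> from \<open>p\<close>, so the chain argument bounds their Gromov product below by
  \<open>D - L - O(\<delta> log (L D))\<close>. As \<open>p\<close> lies on the geodesic between the first two points, their
  Gromov product is \<open>0\<close>, and the four-point condition bounds \<open>D\<close>.\<close>

lemma farthest_point_bound:
  assumes L: "L \<ge> 1"
    and c: "metric_geodesic d c N" "\<forall>t\<le>N. c t \<in> V"
    and r: "metric_quasigeodesic d L r n" "\<forall>j\<le>n. r j \<in> V"
    and ends: "c 0 = r 0" "c N = r n"
    and t0: "t0 \<le> N" and D: "1 \<le> D"
    and near: "\<forall>t\<le>N. \<exists>j\<le>n. d (c t) (r j) \<le> D"
    and far: "\<forall>j\<le>n. D \<le> d (c t0) (r j)"
  shows "real D \<le> L + 3 * \<delta> + \<delta> * log 2 (6 * L * D)"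
proof -
  define p where "p = c t0"
  have pV: "p \<in> V" using c t0 by (simp add: p_def)
  have dist_p: "d p (c s) = (if s \<le> t0 then t0 - s else s - t0)" if "s \<le> N" for s
    using c d_sym[of "c s" "c t0"] that t0 unfolding p_def metric_geodesic_def by auto
  define s1 where "s1 = (if 2 * D \<le> t0 then t0 - 2 * D else 0)"
  define s2 where "s2 = (if t0 + 2 * D \<le> N then t0 + 2 * D else N)"
  have s12: "s1 \<le> t0" "t0 - s1 \<le> 2 * D" "t0 \<le> s2" "s2 \<le> N" "s2 - t0 \<le> 2 * D"
    unfolding s1_def s2_def using t0 by auto
  have pos: "d p (c s1) = 2 * D \<or> (\<exists>j\<le>n. c s1 = r j)" "d p (c s2) = 2 * D \<or> (\<exists>j\<le>n. c s2 = r j)"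
    using dist_p[of s1] dist_p[of s2] ends s12 unfolding s1_def s2_def by auto
  have cV: "c s1 \<in> V" "c s2 \<in> V" and far_p: "\<forall>j\<le>n. D \<le> d p (r j)"
    using c s12 t0 far unfolding p_def by auto
  have "s1 \<le> N" using s12 t0 by simp
  obtain j1 where j1: "j1 \<le> n" "d (c s1) (r j1) \<le> D" "D \<le> gromov_prod d p (c s1) (r j1)"
    using near_point_gromov_witness[OF pV cV(1) r(2) far_p near[rule_format, OF \<open>s1 \<le> N\<close>] pos(1)] .
  obtain j2 where j2: "j2 \<le> n" "d (c s2) (r j2) \<le> D" "D \<le> gromov_prod d p (c s2) (r j2)"
    using near_point_gromov_witness[OF pV cV(2) r(2) far_p near[rule_format, OF s12(4)] pos(2)] .
  have rV: "r j1 \<in> V" "r j2 \<in> V" using r j1 j2 by auto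
  have "gromov_prod d p (c s1) (c s2) = 0"
    using dist_p[of s1] dist_p[of s2] c(1) s12 unfolding gromov_prod_def metric_geodesic_def by auto
  moreover have "d (r j1) (r j2) \<le> 6 * D"
  proof -
    have "d (r j1) (r j2) \<le> d (r j1) (c s1) + d (c s1) (c s2) + d (c s2) (r j2)"
      using d_triangle[of "r j1" "c s1" "r j2"] d_triangle[of "c s1" "c s2" "r j2"] cV rV by simp
    moreover have "d (c s1) (c s2) = s2 - s1" using c(1) s12 unfolding metric_geodesic_def by simp
    ultimately show ?thesis using j1 j2 s12 d_sym[of "r j1" "c s1"] cV rV by simp
  qed
  then have "real D - L - \<delta> * (log 2 (6 * L * D) + 1) \<le> gromov_prod d p (r j1) (r j2)"
    using quasigeodesic_far_gromov_prod L r pV far D j1 j2 unfolding p_def by blast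
  moreover have "0 \<le> L + \<delta> * (log 2 (6 * L * D) + 1)"
    using L D delta_nonneg mult_mono[of 1 "6 * L" 1 "real D"] by simp
  ultimately show ?thesis
    using gromov_prod_four_points[OF pV cV(1) rV cV(2)] j1 j2 gromov_prod_commute[OF rV(2) cV(2)]
    by (simp add: algebra_simps)
qed

lemma geodesic_near_quasigeodesic:
  assumes L: "L \<ge> 1"
  obtains B where "B \<ge> 0"
    "\<And>c N r n t. metric_geodesic d c N \<Longrightarrow> \<forall>t\<le>N. c t \<in> V \<Longrightarrow>
       metric_quasigeodesic d L r n \<Longrightarrow> \<forall>j\<le>n. r j \<in> V \<Longrightarrow> c 0 = r 0 \<Longrightarrow> c N = r n \<Longrightarrow>
       t \<le> N \<Longrightarrow> \<exists>j\<le>n. real (d (c t) (r j)) \<le> B"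
proof -
  obtain B where B: "\<And>x. x \<ge> 1 \<Longrightarrow> x \<le> L + 3 * \<delta> + \<delta> * log 2 (6 * L * x) \<Longrightarrow> x \<le> B"
    using le_log_imp_bounded[of "6 * L" \<delta> "L + 3 * \<delta>"] L delta_nonneg by auto
  have "\<exists>j\<le>n. real (d (c t) (r j)) \<le> max B 0"
    if c: "metric_geodesic d c N" "\<forall>t\<le>N. c t \<in> V"
      and r: "metric_quasigeodesic d L r n" "\<forall>j\<le>n. r j \<in> V"
      and ends: "c 0 = r 0" "c N = r n" and t: "t \<le> N" for c N r n t
  proof -
    obtain D t0 where t0: "t0 \<le> N" and near: "\<forall>s\<le>N. \<exists>j\<le>n. d (c s) (r j) \<le> D"
      and far: "\<forall>j\<le>n. D \<le> d (c t0) (r j)"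
      by (rule max_min_attained)
    have "real D \<le> max B 0"
    proof (cases "D = 0")
      case False
      then have "real D \<le> L + 3 * \<delta> + \<delta> * log 2 (6 * L * D)"
        using farthest_point_bound[OF L c r ends t0 _ near far] by simp
      then show ?thesis using B[of "real D"] False by simp
    qed simp
    moreover obtain j where "j \<le> n" "d (c t) (r j) \<le> D" using near t by blast
    ultimately show ?thesis by (intro exI[of _ j]) simp
  qed
  then show ?thesis using that[of "max B 0"] by simp
qed

lemma geodesic_crossing:
  fixes r :: "nat \<Rightarrow> 'a"
  assumes c: "metric_geodesic d c N" "\<forall>t\<le>N. c t \<in> V" and r: "\<forall>j\<le>n. r j \<in> V"
    and ends: "c 0 = r 0" "c N = r n" and i: "i \<le> n"
    and near: "\<forall>t\<le>N. \<exists>j\<le>n. real (d (c t) (r j)) \<le> B"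
  obtains t j1 j2 where "t \<le> N" "j1 \<le> i" "i \<le> j2" "j2 \<le> n"
    "real (d (c t) (r j1)) \<le> B" "real (d (c t) (r j2)) \<le> B + 1"
proof -
  obtain j0 where "real (d (c 0) (r j0)) \<le> B" using near by auto
  then have B: "0 \<le> B" using of_nat_0_le_iff by (rule order_trans[rotated])
  define R where "R s \<longleftrightarrow> (\<exists>j. i \<le> j \<and> j \<le> n \<and> real (d (c s) (r j)) \<le> B)" for s
  have "R N" unfolding R_def using i ends B r by (intro exI[of _ n]) simp
  define ts where "ts = (LEAST s. R s)"
  \<comment> \<open>One step before \<open>ts\<close>, the geodesic is \<open>B\<close>-close to \<open>r\<close> only at indices below \<open>i\<close>.\<close>
  have ts: "R ts" "ts \<le> N" unfolding ts_def using \<open>R N\<close> by (auto intro: LeastI Least_le)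
  then obtain j2 where j2: "i \<le> j2" "j2 \<le> n" "real (d (c ts) (r j2)) \<le> B" unfolding R_def by blast
  show ?thesis
  proof (cases "ts = 0")
    case True
    then show ?thesis using that[of 0 0 j2] j2 ends r B by simp
  next
    case False
    have "ts - 1 \<le> N" using ts by simp
    then obtain j1 where j1: "j1 \<le> n" "real (d (c (ts - 1)) (r j1)) \<le> B" using near by blast
    moreover have "\<not> R (ts - 1)" unfolding ts_def using False ts_def by (intro not_less_Least) auto
    ultimately have "j1 < i" unfolding R_def by (cases "i \<le> j1") auto
    have "d (c (ts - 1)) (r j2) \<le> d (c (ts - 1)) (c ts) + d (c ts) (r j2)"
      using d_triangle[of "c (ts - 1)" "c ts" "r j2"] c r ts j2 by simp
    moreover have "d (c (ts - 1)) (c ts) = 1"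
      using c(1) ts False unfolding metric_geodesic_def by simp
    ultimately show ?thesis using that[of "ts - 1" j1 j2] j1 j2 ts \<open>j1 < i\<close> by simp
  qed
qed

lemma quasigeodesic_near_geodesic:
  assumes L: "L \<ge> 1" and r: "metric_quasigeodesic d L r n" "\<forall>j\<le>n. r j \<in> V"
    and c: "metric_geodesic d c N" "\<forall>t\<le>N. c t \<in> V" and ends: "c 0 = r 0" "c N = r n"
    and near: "\<forall>t\<le>N. \<exists>j\<le>n. real (d (c t) (r j)) \<le> B" and i: "i \<le> n"
  shows "\<exists>t\<le>N. real (d (r i) (c t)) \<le> L * L * (2 * B + 1) + B"
proof -
  obtain t j1 j2 where t: "t \<le> N" "j1 \<le> i" "i \<le> j2" "j2 \<le> n"
    "real (d (c t) (r j1)) \<le> B" "real (d (c t) (r j2)) \<le> B + 1"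
    using geodesic_crossing[OF c r(2) ends i near] by blast
  have V: "r j1 \<in> V" "r j2 \<in> V" "r i \<in> V" "c t \<in> V" using r c t i by auto
  have "d (r j1) (r j2) \<le> d (c t) (r j1) + d (c t) (r j2)"
    using d_triangle[of "r j1" "c t" "r j2"] d_sym[of "r j1" "c t"] V by simp
  then have "real (j2 - j1) \<le> L * (2 * B + 1)"
    using metric_quasigeodesicD(1)[OF r(1), of j1 j2] t L
    by (smt (verit, best) mult_left_mono of_nat_add of_nat_le_iff)
  moreover have "real (d (r j1) (r i)) \<le> L * real (j2 - j1)"
    using metric_quasigeodesicD(2)[OF r(1), of j1 i] t L
    by (smt (verit) diff_le_mono mult_left_mono of_nat_0_le_iff of_nat_le_iff)
  ultimately have "real (d (r j1) (r i)) \<le> L * (L * (2 * B + 1))"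
    using L by (smt (verit) mult_left_mono)
  moreover have "d (r i) (c t) \<le> d (r j1) (r i) + d (c t) (r j1)"
    using d_triangle[of "r i" "r j1" "c t"] d_sym[of "r i" "r j1"] d_sym[of "r j1" "c t"] V by simp
  ultimately show ?thesis using t by (intro exI[of _ t]) simp
qed

lemma quasigeodesics_close:
  assumes L: "L \<ge> 1"
  obtains D where
    "\<And>p n q m i. metric_quasigeodesic d L p n \<Longrightarrow> metric_quasigeodesic d L q m \<Longrightarrow>
       \<forall>i\<le>n. p i \<in> V \<Longrightarrow> \<forall>j\<le>m. q j \<in> V \<Longrightarrow> p 0 = q 0 \<Longrightarrow> p n = q m \<Longrightarrow> i \<le> n \<Longrightarrow>
       \<exists>j\<le>m. real (d (p i) (q j)) \<le> D"
proof -
  obtain B where B: "B \<ge> 0"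
    "\<And>c N r n t. metric_geodesic d c N \<Longrightarrow> \<forall>t\<le>N. c t \<in> V \<Longrightarrow>
       metric_quasigeodesic d L r n \<Longrightarrow> \<forall>j\<le>n. r j \<in> V \<Longrightarrow> c 0 = r 0 \<Longrightarrow> c N = r n \<Longrightarrow>
       t \<le> N \<Longrightarrow> \<exists>j\<le>n. real (d (c t) (r j)) \<le> B"
    using geodesic_near_quasigeodesic[OF L] by blast
  have "\<exists>j\<le>m. real (d (p i) (q j)) \<le> L * L * (2 * B + 1) + B + B"
    if p: "metric_quasigeodesic d L p n" "\<forall>i\<le>n. p i \<in> V"
      and q: "metric_quasigeodesic d L q m" "\<forall>j\<le>m. q j \<in> V"
      and ends: "p 0 = q 0" "p n = q m" and i: "i \<le> n" for p n q m i
  proof -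
    obtain c where c: "c 0 = p 0" "c (d (p 0) (p n)) = p n"
      "\<forall>t\<le>d (p 0) (p n). c t \<in> V" "metric_geodesic d c (d (p 0) (p n))"
      using geodesic_exists[of "p 0" "p n"] p by auto
    obtain t where t: "t \<le> d (p 0) (p n)" "real (d (p i) (c t)) \<le> L * L * (2 * B + 1) + B"
      using quasigeodesic_near_geodesic[OF L p c(4,3,1,2) _ i] B(2)[OF c(4,3) p c(1,2)] by blast
    obtain j where j: "j \<le> m" "real (d (c t) (q j)) \<le> B"
      using B(2)[OF c(4,3) q] c ends t by auto
    have "d (p i) (q j) \<le> d (p i) (c t) + d (c t) (q j)"
      using d_triangle p(2) q(2) c(3) i t j by simp
    then show ?thesis using t j by (intro exI[of _ j]) simp
  qed
  then show ?thesis using that by blast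
qed

end

lemma word_hyperbolic_imp_hyperbolic_space:
  assumes "word_hyperbolic G"
  obtains S \<delta> where "sym_word_gen G S" "finite S" "hyperbolic_space (carrier G) (word_dist G S) \<delta>"
proof -
  obtain S \<delta> where G: "group G" and S: "finite_sym_gen_set G S"
    and four: "\<forall>w\<in>carrier G. \<forall>x\<in>carrier G. \<forall>y\<in>carrier G. \<forall>z\<in>carrier G.
       gromov_product G S w x z \<ge> min (gromov_product G S w x y) (gromov_product G S w y z) - \<delta>"
    using assms unfolding word_hyperbolic_def by blast
  interpret group G by (rule G)
  have S_gen: "sym_word_gen G S"
    using S unfolding finite_sym_gen_set_def by (intro sym_word_gen_if_generate) auto
  interpret nat_metric "carrier G" "word_dist G S" by (rule word_metric[OF S_gen])
  have gromov: "gromov_product G S = gromov_prod (word_dist G S)"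
    by (simp add: fun_eq_iff gromov_product_def gromov_prod_def)
  have "hyperbolic_space (carrier G) (word_dist G S) \<delta>"
  proof
    show "0 \<le> \<delta>"
      using four[rule_format, of "\<one>\<^bsub>G\<^esub>" "\<one>\<^bsub>G\<^esub>" "\<one>\<^bsub>G\<^esub>" "\<one>\<^bsub>G\<^esub>"]
      by (simp add: gromov gromov_prod_def)
    show "min (gromov_prod (word_dist G S) w x y) (gromov_prod (word_dist G S) w y z) - \<delta>
        \<le> gromov_prod (word_dist G S) w x z"
      if "w \<in> carrier G" "x \<in> carrier G" "y \<in> carrier G" "z \<in> carrier G" for w x y z
      using four that unfolding gromov by blast
    show "\<exists>c. c 0 = x \<and> c (word_dist G S x y) = y \<and> (\<forall>t\<le>word_dist G S x y. c t \<in> carrier G)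
        \<and> metric_geodesic (word_dist G S) c (word_dist G S x y)"
      if "x \<in> carrier G" "y \<in> carrier G" for x y
      using word_geodesic_exists[OF S_gen that] by metis
  qed
  then show ?thesis using that S_gen S unfolding finite_sym_gen_set_def by blast
qed

text \<open>Hyperbolicity is only assumed for some generating set \<open>S\<close>; quasigeodesics for \<open>T\<close> are
  transported to \<open>S\<close> through the bi-Lipschitz equivalence of the two word metrics.\<close>

lemma word_hyperbolic_quasigeodesics_close:
  assumes hyp: "word_hyperbolic G" and T: "sym_word_gen G T" "finite T" and lam: "lam > 0"
  obtains D where
    "\<And>p n q m i. quasigeodesic G T lam p n \<Longrightarrow> quasigeodesic G T lam q m \<Longrightarrow>
       \<forall>i\<le>n. p i \<in> carrier G \<Longrightarrow> \<forall>j\<le>m. q j \<in> carrier G \<Longrightarrow> p 0 = q 0 \<Longrightarrow> p n = q m \<Longrightarrow>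
       i \<le> n \<Longrightarrow> \<exists>j\<le>m. real (word_dist G T (p i) (q j)) \<le> D"
proof -
  interpret group G using hyp unfolding word_hyperbolic_def by blast
  obtain S \<delta> where S: "sym_word_gen G S" "finite S"
    and H: "hyperbolic_space (carrier G) (word_dist G S) \<delta>"
    using word_hyperbolic_imp_hyperbolic_space[OF hyp] by blast
  obtain M where M: "M \<ge> 1" and lip: "\<And>x y. x \<in> carrier G \<Longrightarrow> y \<in> carrier G \<Longrightarrow>
       real (word_dist G S x y) \<le> M * real (word_dist G T x y)
       \<and> real (word_dist G T x y) \<le> M * real (word_dist G S x y)"
    using word_dist_bilipschitz[OF S T] by blast
  define L where "L = max 1 (lam * M)"
  have L: "1 \<le> L" unfolding L_def by simp
  obtain D where D: "\<And>p n q m i. metric_quasigeodesic (word_dist G S) L p n \<Longrightarrow>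
       metric_quasigeodesic (word_dist G S) L q m \<Longrightarrow>
       \<forall>i\<le>n. p i \<in> carrier G \<Longrightarrow> \<forall>j\<le>m. q j \<in> carrier G \<Longrightarrow> p 0 = q 0 \<Longrightarrow> p n = q m \<Longrightarrow>
       i \<le> n \<Longrightarrow> \<exists>j\<le>m. real (word_dist G S (p i) (q j)) \<le> D"
    using hyperbolic_space.quasigeodesics_close[OF H L] by blast
  have to_S: "metric_quasigeodesic (word_dist G S) L p n"
    if "quasigeodesic G T lam p n" "\<forall>i\<le>n. p i \<in> carrier G" for p n
  proof -
    have "metric_quasigeodesic (word_dist G S) (lam * M) p n"
      using that M lam lip unfolding quasigeodesic_eq_metric_quasigeodesic
      by (intro metric_quasigeodesic_bilipschitz) auto
    moreover have "0 < lam * M" using lam M by simp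
    ultimately show ?thesis unfolding L_def by (rule metric_quasigeodesic_mono) simp
  qed
  show ?thesis
  proof (rule that)
    fix p n q m i
    assume p: "quasigeodesic G T lam p n" "\<forall>i\<le>n. p i \<in> carrier G"
      and q: "quasigeodesic G T lam q m" "\<forall>j\<le>m. q j \<in> carrier G"
      and ends: "p 0 = q 0" "p n = q m" and i: "i \<le> n"
    obtain j where j: "j \<le> m" "real (word_dist G S (p i) (q j)) \<le> D"
      using D[OF to_S[OF p] to_S[OF q] p(2) q(2) ends i] by blast
    then have "real (word_dist G T (p i) (q j)) \<le> M * D"
      using lip[of "p i" "q j"] p q i M by (smt (verit) mult_left_mono)
    then show "\<exists>j\<le>m. real (word_dist G T (p i) (q j)) \<le> M * D" using j by blast
  qed
qed

section \<open>Central extensions and the maximal section\<close>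

locale central_ext =
  fixes G :: "('g, 'c) monoid_scheme" and E :: "('e, 'd) monoid_scheme"
    and \<iota> :: "int \<Rightarrow> 'e" and \<pi> :: "'e \<Rightarrow> 'g"
  assumes central_extension: "central_extension G E \<iota> \<pi>"
begin

sublocale E: group E
  using central_extension unfolding central_extension_def by blast

sublocale G: group G
  using central_extension unfolding central_extension_def by blast

sublocale pi: group_hom E G \<pi>
  using central_extension unfolding central_extension_def group_hom_def group_hom_axioms_def by blast

lemma iota_closed [simp]: "\<iota> n \<in> carrier E"
  using central_extension unfolding central_extension_def by blast

lemma iota_add: "\<iota> (a + b) = \<iota> a \<otimes>\<^bsub>E\<^esub> \<iota> b"
  using central_extension unfolding central_extension_def by blast

lemma iota_central: "x \<in> carrier E \<Longrightarrow> \<iota> n \<otimes>\<^bsub>E\<^esub> x = x \<otimes>\<^bsub>E\<^esub> \<iota> n"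
  using central_extension unfolding central_extension_def by blast

lemma iota_eq_iff [simp]: "\<iota> a = \<iota> b \<longleftrightarrow> a = b"
  using central_extension unfolding central_extension_def by (auto dest: injD)

lemma iota_zero [simp]: "\<iota> 0 = \<one>\<^bsub>E\<^esub>"
  using iota_add[of 0 0] by (simp add: E.l_cancel_one')

lemma pi_surj: "\<pi> ` carrier E = carrier G"
  using central_extension unfolding central_extension_def by blast

lemma fibre_le_iff:
  assumes "x \<in> carrier E" "y \<in> carrier E"
  shows "fibre_le E \<iota> x y \<longleftrightarrow> (\<exists>n\<ge>0. y = x \<otimes>\<^bsub>E\<^esub> \<iota> n)"
proof -
  have "y \<otimes>\<^bsub>E\<^esub> inv\<^bsub>E\<^esub> x = \<iota> n \<longleftrightarrow> y = x \<otimes>\<^bsub>E\<^esub> \<iota> n" for n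
    using E.inv_solve_right'[of "\<iota> n" y x] iota_central[OF assms(1), of n] assms by simp
  then show ?thesis unfolding fibre_le_def by simp
qed

lemma fibre_le_mult:
  assumes "x \<in> carrier E" "x' \<in> carrier E" "y \<in> carrier E" "y' \<in> carrier E"
    and "fibre_le E \<iota> x x'" "fibre_le E \<iota> y y'"
  shows "fibre_le E \<iota> (x \<otimes>\<^bsub>E\<^esub> y) (x' \<otimes>\<^bsub>E\<^esub> y')"
proof -
  obtain m n where mn: "0 \<le> m" "x' = x \<otimes>\<^bsub>E\<^esub> \<iota> m" "0 \<le> n" "y' = y \<otimes>\<^bsub>E\<^esub> \<iota> n"
    using assms(5,6) unfolding fibre_le_iff[OF assms(1,2)] fibre_le_iff[OF assms(3,4)] by blast
  have "x' \<otimes>\<^bsub>E\<^esub> y' = x \<otimes>\<^bsub>E\<^esub> (\<iota> m \<otimes>\<^bsub>E\<^esub> y) \<otimes>\<^bsub>E\<^esub> \<iota> n"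
    using mn assms by (simp add: E.m_assoc)
  also have "\<dots> = x \<otimes>\<^bsub>E\<^esub> (y \<otimes>\<^bsub>E\<^esub> \<iota> m) \<otimes>\<^bsub>E\<^esub> \<iota> n"
    using iota_central[OF assms(3)] by simp
  also have "\<dots> = (x \<otimes>\<^bsub>E\<^esub> y) \<otimes>\<^bsub>E\<^esub> \<iota> (m + n)"
    using assms by (simp add: iota_add E.m_assoc)
  finally show ?thesis using assms mn by (simp add: fibre_le_iff)
qed

lemma fibre_le_squeeze:
  assumes "x \<in> carrier E" "y \<in> carrier E"
    and "fibre_le E \<iota> (x \<otimes>\<^bsub>E\<^esub> \<iota> (- c)) y" "fibre_le E \<iota> y x"
  obtains N where "inv\<^bsub>E\<^esub> x \<otimes>\<^bsub>E\<^esub> y = \<iota> N" "- c \<le> N" "N \<le> 0"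
proof -
  have "x \<otimes>\<^bsub>E\<^esub> \<iota> (- c) \<in> carrier E" using assms(1) by simp
  obtain m where m: "0 \<le> m" "y = x \<otimes>\<^bsub>E\<^esub> \<iota> (- c) \<otimes>\<^bsub>E\<^esub> \<iota> m"
    using assms(3) unfolding fibre_le_iff[OF \<open>x \<otimes>\<^bsub>E\<^esub> \<iota> (- c) \<in> carrier E\<close> assms(2)] by blast
  obtain n where n: "0 \<le> n" "x = y \<otimes>\<^bsub>E\<^esub> \<iota> n"
    using assms(4) unfolding fibre_le_iff[OF assms(2,1)] by blast
  have y: "y = x \<otimes>\<^bsub>E\<^esub> \<iota> (m - c)"
    using m(2) assms(1) by (simp add: E.m_assoc flip: iota_add)
  have "x \<otimes>\<^bsub>E\<^esub> \<one>\<^bsub>E\<^esub> = x \<otimes>\<^bsub>E\<^esub> \<iota> (m - c + n)"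
  proof -
    have "x = y \<otimes>\<^bsub>E\<^esub> \<iota> n" by (rule n(2))
    also have "\<dots> = x \<otimes>\<^bsub>E\<^esub> \<iota> (m - c + n)"
      unfolding y using assms(1) by (simp add: iota_add E.m_assoc)
    finally show ?thesis using assms(1) by simp
  qed
  then have "\<iota> 0 = \<iota> (m - c + n)" using assms(1) E.l_cancel by simp
  then have "m - c + n = 0" using iota_eq_iff[of 0 "m - c + n"] by simp
  moreover have "inv\<^bsub>E\<^esub> x \<otimes>\<^bsub>E\<^esub> y = \<iota> (m - c)" using y assms(1) by (simp add: E.m_assoc[symmetric])
  ultimately show ?thesis using that[of "m - c"] m(1) n(1) by simp
qed

lemma word_length_iota_neg:
  assumes "sym_word_gen E S"
  shows "word_length E S (\<iota> (- int m)) \<le> m * word_length E S (\<iota> (- 1))"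
proof (induction m)
  case (Suc m)
  have "\<iota> (- int (Suc m)) = \<iota> (- int m) \<otimes>\<^bsub>E\<^esub> \<iota> (- 1)" by (simp flip: iota_add)
  then show ?case using E.word_length_mult[OF assms, of "\<iota> (- int m)" "\<iota> (- 1)"] Suc by simp
qed simp

lemma word_dist_fibre_squeeze:
  assumes S: "sym_word_gen E S" and xy: "x \<in> carrier E" "y \<in> carrier E"
    and le: "fibre_le E \<iota> (x \<otimes>\<^bsub>E\<^esub> \<iota> (- c)) y" "fibre_le E \<iota> y x"
  shows "real (word_dist E S x y) \<le> real_of_int c * real (word_length E S (\<iota> (- 1)))"
proof -
  obtain N where N: "inv\<^bsub>E\<^esub> x \<otimes>\<^bsub>E\<^esub> y = \<iota> N" "- c \<le> N" "N \<le> 0"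
    by (rule fibre_le_squeeze[OF xy le])
  have "word_dist E S x y = word_length E S (\<iota> (- int (nat (- N))))"
    unfolding word_dist_def N(1) using N(3) by simp
  also have "\<dots> \<le> nat (- N) * word_length E S (\<iota> (- 1))"
    by (rule word_length_iota_neg[OF S])
  finally have "real (word_dist E S x y) \<le> real (nat (- N)) * real (word_length E S (\<iota> (- 1)))"
    by (simp flip: of_nat_mult)
  also have "\<dots> \<le> real_of_int c * real (word_length E S (\<iota> (- 1)))"
    using N(2,3) by (intro mult_right_mono) simp_all
  finally show ?thesis .
qed

end

locale fibre_max_section = central_ext G E \<iota> \<pi>
  for G :: "('g, 'c) monoid_scheme" and E :: "('e, 'd) monoid_scheme" and \<iota> \<pi> +
  fixes A :: "'x set" and ev :: "'x \<Rightarrow> 'e" and C :: int and \<rho> :: "'g \<Rightarrow> 'e"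
  assumes ev_closed: "ev ` A \<subseteq> carrier E"
    and ev_inv_closed: "\<forall>x\<in>A. inv\<^bsub>E\<^esub> (ev x) \<in> ev ` A"
    and ev_generate: "generate E (ev ` A) = carrier E"
    and rho_max: "\<forall>g\<in>carrier G. is_fibre_max E \<iota> (candidates E \<iota> \<pi> C A ev g) (\<rho> g)"
begin

abbreviation val :: "'x list \<Rightarrow> 'e" where
  "val w \<equiv> word_prod E (map ev w)"

abbreviation pen :: "'x list \<Rightarrow> 'e" where
  "pen w \<equiv> penalized E \<iota> C ev w"

lemma val_closed: "set w \<subseteq> A \<Longrightarrow> val w \<in> carrier E"
  using ev_closed by (intro E.word_prod_closed) auto

lemma val_append:
  assumes "set v \<subseteq> A" "set w \<subseteq> A"
  shows "val (v @ w) = val v \<otimes>\<^bsub>E\<^esub> val w"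
proof -
  have "set (map ev v) \<subseteq> carrier E" "set (map ev w) \<subseteq> carrier E" using assms ev_closed by auto
  then show ?thesis by (simp add: E.word_prod_append)
qed

lemma pen_closed: "set w \<subseteq> A \<Longrightarrow> pen w \<in> carrier E"
  by (simp add: penalized_def val_closed)

lemma pen_append:
  assumes "set v \<subseteq> A" "set w \<subseteq> A"
  shows "pen (v @ w) = pen v \<otimes>\<^bsub>E\<^esub> pen w"
proof -
  define a b where "a = \<iota> (- C * int (length v))" and "b = \<iota> (- C * int (length w))"
  have "pen (v @ w) = val v \<otimes>\<^bsub>E\<^esub> val w \<otimes>\<^bsub>E\<^esub> (a \<otimes>\<^bsub>E\<^esub> b)"
    using val_append[OF assms] unfolding penalized_def a_def b_def
    by (simp add: algebra_simps del: map_append flip: iota_add)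
  also have "\<dots> = val v \<otimes>\<^bsub>E\<^esub> (a \<otimes>\<^bsub>E\<^esub> val w) \<otimes>\<^bsub>E\<^esub> b"
    using assms iota_central[OF val_closed[OF assms(2)]] by (simp add: a_def b_def val_closed E.m_assoc)
  also have "\<dots> = pen v \<otimes>\<^bsub>E\<^esub> pen w"
    using assms unfolding penalized_def a_def b_def by (simp add: val_closed E.m_assoc)
  finally show ?thesis .
qed

lemma pen_insert_trivial:
  assumes "set v \<subseteq> A" "set z \<subseteq> A" "set w \<subseteq> A" "val z = \<one>\<^bsub>E\<^esub>"
  shows "pen (v @ z @ w) = pen (v @ w) \<otimes>\<^bsub>E\<^esub> \<iota> (- C * int (length z))"
proof -
  have "pen z = \<iota> (- C * int (length z))" using assms(4) unfolding penalized_def by simp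
  then have "pen (v @ z @ w) = pen v \<otimes>\<^bsub>E\<^esub> (\<iota> (- C * int (length z)) \<otimes>\<^bsub>E\<^esub> pen w)"
    using assms by (simp add: pen_append pen_closed E.m_assoc)
  also have "\<dots> = pen v \<otimes>\<^bsub>E\<^esub> (pen w \<otimes>\<^bsub>E\<^esub> \<iota> (- C * int (length z)))"
    using iota_central[OF pen_closed[OF assms(3)]] by simp
  finally show ?thesis
    using assms by (simp add: pen_append pen_closed E.m_assoc)
qed

lemma rho_attained:
  assumes "g \<in> carrier G"
  obtains w where "set w \<subseteq> A" "\<pi> (val w) = g" "pen w = \<rho> g"
  using rho_max assms unfolding is_fibre_max_def candidates_def by force

lemma rho_closed: "g \<in> carrier G \<Longrightarrow> \<rho> g \<in> carrier E"
  by (metis pen_closed rho_attained)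

lemma pen_le_rho: "set w \<subseteq> A \<Longrightarrow> fibre_le E \<iota> (pen w) (\<rho> (\<pi> (val w)))"
  using rho_max val_closed unfolding is_fibre_max_def candidates_def by auto

lemma inverse_word:
  assumes "set u \<subseteq> A"
  obtains u' where "set u' \<subseteq> A" "length u' = length u" "val u' = inv\<^bsub>E\<^esub> (val u)"
proof -
  have "\<forall>x\<in>A. \<exists>x'. x' \<in> A \<and> ev x' = inv\<^bsub>E\<^esub> (ev x)"
    using ev_inv_closed by (metis imageE)
  then obtain f where f: "\<forall>x\<in>A. f x \<in> A \<and> ev (f x) = inv\<^bsub>E\<^esub> (ev x)"
    by (rule bchoice[elim_format]) blast
  have "map ev (rev (map f u)) = rev (map (m_inv E) (map ev u))"
    using assms f by (simp add: rev_map subset_iff)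
  moreover have "set (map ev u) \<subseteq> carrier E" using assms ev_closed by auto
  ultimately have "val (rev (map f u)) = inv\<^bsub>E\<^esub> (val u)"
    by (simp only: E.word_prod_rev_inv)
  moreover have "set (rev (map f u)) \<subseteq> A" using assms f by auto
  ultimately show ?thesis by (intro that[of "rev (map f u)"]) simp_all
qed

lemma rho_mult_le:
  assumes "g \<in> carrier G" "h \<in> carrier G"
  shows "fibre_le E \<iota> (\<rho> g \<otimes>\<^bsub>E\<^esub> \<rho> h) (\<rho> (g \<otimes>\<^bsub>G\<^esub> h))"
proof -
  obtain v where v: "set v \<subseteq> A" "\<pi> (val v) = g" "pen v = \<rho> g"
    using rho_attained assms(1) by blast
  obtain w where w: "set w \<subseteq> A" "\<pi> (val w) = h" "pen w = \<rho> h"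
    using rho_attained assms(2) by blast
  have "\<pi> (val (v @ w)) = g \<otimes>\<^bsub>G\<^esub> h" using v w by (simp add: val_append val_closed del: map_append)
  then show ?thesis using pen_le_rho[of "v @ w"] v w by (simp add: pen_append del: map_append)
qed

text \<open>Cut a maximal word \<open>w\<close> for \<open>g h\<close> after \<open>j\<close> letters and insert \<open>u u'\<close>, with \<open>u'\<close> a formal
  inverse of \<open>u\<close>: the two halves are words for \<open>g\<close> and \<open>h\<close>, and the insertion only costs the
  penalty \<open>2 C |u|\<close>.\<close>

lemma rho_mult_ge:
  assumes gh: "g \<in> carrier G" "h \<in> carrier G"
    and w: "set w \<subseteq> A" "\<pi> (val w) = g \<otimes>\<^bsub>G\<^esub> h" "pen w = \<rho> (g \<otimes>\<^bsub>G\<^esub> h)"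
    and u: "set u \<subseteq> A" "\<pi> (val (take j w @ u)) = g"
  shows "fibre_le E \<iota> (\<rho> (g \<otimes>\<^bsub>G\<^esub> h) \<otimes>\<^bsub>E\<^esub> \<iota> (- (2 * C * int (length u)))) (\<rho> g \<otimes>\<^bsub>E\<^esub> \<rho> h)"
proof -
  define w1 w2 where "w1 = take j w" and "w2 = drop j w"
  have w12: "w = w1 @ w2" "set w1 \<subseteq> A" "set w2 \<subseteq> A"
    unfolding w1_def w2_def using w(1) by (auto dest: in_set_takeD in_set_dropD)
  obtain u' where u': "set u' \<subseteq> A" "length u' = length u" "val u' = inv\<^bsub>E\<^esub> (val u)"
    using inverse_word[OF u(1)] by blast
  define a b c where "a = \<pi> (val w1)" and "b = \<pi> (val u)" and "c = \<pi> (val w2)"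
  have abc: "a \<in> carrier G" "b \<in> carrier G" "c \<in> carrier G"
    unfolding a_def b_def c_def using w12 u by (simp_all add: val_closed)
  have g: "a \<otimes>\<^bsub>G\<^esub> b = g"
    using u w12 unfolding a_def b_def w1_def by (simp add: val_append val_closed del: map_append)
  have "a \<otimes>\<^bsub>G\<^esub> c = g \<otimes>\<^bsub>G\<^esub> h"
    using w(2) w12 unfolding a_def c_def by (simp add: val_append val_closed del: map_append)
  also have "\<dots> = a \<otimes>\<^bsub>G\<^esub> (b \<otimes>\<^bsub>G\<^esub> h)" unfolding g[symmetric] using abc gh by (simp add: G.m_assoc)
  finally have "c = b \<otimes>\<^bsub>G\<^esub> h" using abc gh by simp
  then have h: "\<pi> (val (u' @ w2)) = h"
    using u u' w12 abc gh unfolding b_def c_def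
    by (simp add: val_append val_closed G.inv_solve_left' del: map_append)
  have "fibre_le E \<iota> (pen (w1 @ u)) (\<rho> g)"
    using pen_le_rho[of "w1 @ u"] u w12 unfolding w1_def by simp
  moreover have "fibre_le E \<iota> (pen (u' @ w2)) (\<rho> h)"
    using pen_le_rho[of "u' @ w2"] h u' w12 by simp
  ultimately have "fibre_le E \<iota> (pen (w1 @ u) \<otimes>\<^bsub>E\<^esub> pen (u' @ w2)) (\<rho> g \<otimes>\<^bsub>E\<^esub> \<rho> h)"
    using u u' w12 gh
    by (intro fibre_le_mult) (simp_all add: pen_closed rho_closed del: map_append)
  moreover have "pen (w1 @ u) \<otimes>\<^bsub>E\<^esub> pen (u' @ w2) = pen (w1 @ (u @ u') @ w2)"
    using u u' w12 by (simp add: pen_append pen_closed E.m_assoc)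
  moreover have "val (u @ u') = \<one>\<^bsub>E\<^esub>" using u u' by (simp add: val_append val_closed del: map_append)
  then have "pen (w1 @ (u @ u') @ w2) = pen w \<otimes>\<^bsub>E\<^esub> \<iota> (- (2 * C * int (length u)))"
    using u u' w12 by (subst pen_insert_trivial) (simp_all add: algebra_simps)
  ultimately show ?thesis using w(3) by simp
qed

lemma sym_word_gen_E: "sym_word_gen E (ev ` A)"
  using ev_closed ev_inv_closed ev_generate by (intro E.sym_word_gen_if_generate) auto

lemma sym_word_gen_G: "sym_word_gen G (\<pi> ` ev ` A)"
  unfolding sym_word_gen_def
proof (intro conjI ballI)
  show "\<pi> ` ev ` A \<subseteq> carrier G" using ev_closed by auto
next
  fix t assume "t \<in> \<pi> ` ev ` A"
  then obtain x where "x \<in> A" "t = \<pi> (ev x)" by auto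
  then show "inv\<^bsub>G\<^esub> t \<in> \<pi> ` ev ` A" using ev_closed ev_inv_closed by (auto simp flip: pi.hom_inv)
next
  fix g assume "g \<in> carrier G"
  then obtain e where e: "e \<in> carrier E" "g = \<pi> e" using pi_surj by auto
  then obtain ws where ws: "set ws \<subseteq> ev ` A" "word_prod E ws = e"
    using sym_word_gen_E unfolding sym_word_gen_def by blast
  then have "word_prod G (map \<pi> ws) = g" using e ev_closed by (simp flip: pi.word_prod_hom)
  moreover have "set (map \<pi> ws) \<subseteq> \<pi> ` ev ` A" using ws(1) by (simp add: image_mono)
  ultimately show "\<exists>ws. set ws \<subseteq> \<pi> ` ev ` A \<and> word_prod G ws = g" by blast
qed

lemma lift_word:
  assumes "x \<in> carrier G"
  obtains u where "set u \<subseteq> A" "\<pi> (val u) = x" "length u = word_length G (\<pi> ` ev ` A) x"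
proof -
  obtain ws where ws: "set ws \<subseteq> \<pi> ` ev ` A" "length ws = word_length G (\<pi> ` ev ` A) x"
    "word_prod G ws = x"
    using G.word_length_witness[OF sym_word_gen_G assms] by blast
  then have "ws \<in> lists ((\<pi> \<circ> ev) ` A)" by (simp add: image_comp in_lists_conv_set subset_iff)
  then obtain u where "u \<in> lists A" "ws = map (\<pi> \<circ> ev) u" unfolding lists_image by blast
  then have u: "set u \<subseteq> A" "ws = map (\<pi> \<circ> ev) u" by (auto simp: in_lists_conv_set)
  have "set (map ev u) \<subseteq> carrier E" using u ev_closed by auto
  then have "\<pi> (val u) = word_prod G (map \<pi> (map ev u))" by (rule pi.word_prod_hom)
  then have "\<pi> (val u) = x" using u ws by simp
  then show ?thesis using that u ws by simp
qed

lemma word_path_closed: "set w \<subseteq> A \<Longrightarrow> word_path E \<pi> ev w j \<in> carrier G"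
  unfolding word_path_def by (meson pi.hom_closed set_take_subset subset_trans val_closed)

lemma word_path_0 [simp]: "word_path E \<pi> ev w 0 = \<one>\<^bsub>G\<^esub>"
  by (simp add: word_path_def)

lemma word_path_length [simp]: "word_path E \<pi> ev w (length w) = \<pi> (val w)"
  by (simp add: word_path_def)

lemma rho_mult_defect:
  assumes gh: "g \<in> carrier G" "h \<in> carrier G"
    and w: "set w \<subseteq> A" "\<pi> (val w) = g \<otimes>\<^bsub>G\<^esub> h" "pen w = \<rho> (g \<otimes>\<^bsub>G\<^esub> h)"
  shows "real (word_dist E (ev ` A) (\<rho> (g \<otimes>\<^bsub>G\<^esub> h)) (\<rho> g \<otimes>\<^bsub>E\<^esub> \<rho> h))
    \<le> 2 * real_of_int C * real (word_dist G (\<pi> ` ev ` A) (word_path E \<pi> ev w j) g)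
       * real (word_length E (ev ` A) (\<iota> (- 1)))"
proof -
  define q where "q = word_path E \<pi> ev w j"
  have q: "q \<in> carrier G" "q = \<pi> (val (take j w))"
    unfolding q_def using word_path_closed[OF w(1)] by (simp_all add: word_path_def)
  obtain u where u: "set u \<subseteq> A" "\<pi> (val u) = inv\<^bsub>G\<^esub> q \<otimes>\<^bsub>G\<^esub> g"
    "length u = word_dist G (\<pi> ` ev ` A) q g"
    using lift_word[of "inv\<^bsub>G\<^esub> q \<otimes>\<^bsub>G\<^esub> g"] q gh unfolding word_dist_def by auto
  have "set (take j w) \<subseteq> A" using w(1) by (meson set_take_subset subset_trans)
  then have "\<pi> (val (take j w @ u)) = g"
    using u q gh by (simp add: val_append val_closed G.m_assoc[symmetric] del: map_append)
  then have lower: "fibre_le E \<iota> (\<rho> (g \<otimes>\<^bsub>G\<^esub> h) \<otimes>\<^bsub>E\<^esub> \<iota> (- (2 * C * int (length u))))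
      (\<rho> g \<otimes>\<^bsub>E\<^esub> \<rho> h)"
    using rho_mult_ge[OF gh w u(1)] by blast
  have "\<rho> (g \<otimes>\<^bsub>G\<^esub> h) \<in> carrier E" "\<rho> g \<otimes>\<^bsub>E\<^esub> \<rho> h \<in> carrier E"
    using rho_closed gh by simp_all
  then show ?thesis
    using word_dist_fibre_squeeze[OF sym_word_gen_E _ _ lower rho_mult_le[OF gh]]
    unfolding q_def[symmetric] u(3)[symmetric] by simp
qed

lemma maximal_path_fellow_travels:
  assumes hyp: "word_hyperbolic G" and fin: "finite A" and lam: "lam > 0"
    and qg: "\<And>g w. g \<in> carrier G \<Longrightarrow> set w \<subseteq> A \<Longrightarrow> \<pi> (val w) = g \<Longrightarrow> pen w = \<rho> g \<Longrightarrow>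
      quasigeodesic G (\<pi> ` ev ` A) lam (word_path E \<pi> ev w) (length w)"
  obtains D where "\<And>g p n i w. geodesic_path G (\<pi> ` ev ` A) p n \<one>\<^bsub>G\<^esub> g \<Longrightarrow> i \<le> n \<Longrightarrow>
    set w \<subseteq> A \<Longrightarrow> \<pi> (val w) = g \<Longrightarrow> pen w = \<rho> g \<Longrightarrow>
    \<exists>j. real (word_dist G (\<pi> ` ev ` A) (p i) (word_path E \<pi> ev w j)) \<le> D"
proof -
  define T where "T = \<pi> ` ev ` A"
  define L where "L = max 1 lam"
  have T: "sym_word_gen G T" "finite T" using sym_word_gen_G fin by (simp_all add: T_def)
  have mono: "quasigeodesic G T L p n" if "quasigeodesic G T l p n" "0 < l" "l \<le> L" for l p n
    using metric_quasigeodesic_mono that unfolding quasigeodesic_eq_metric_quasigeodesic by blast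
  have "0 < L" unfolding L_def by simp
  then obtain D where D: "\<And>p n q m i. quasigeodesic G T L p n \<Longrightarrow> quasigeodesic G T L q m \<Longrightarrow>
       \<forall>i\<le>n. p i \<in> carrier G \<Longrightarrow> \<forall>j\<le>m. q j \<in> carrier G \<Longrightarrow> p 0 = q 0 \<Longrightarrow> p n = q m \<Longrightarrow>
       i \<le> n \<Longrightarrow> \<exists>j\<le>m. real (word_dist G T (p i) (q j)) \<le> D"
    using word_hyperbolic_quasigeodesics_close[OF hyp T] by blast
  have "\<exists>j. real (word_dist G T (p i) (word_path E \<pi> ev w j)) \<le> D"
    if p: "geodesic_path G T p n \<one>\<^bsub>G\<^esub> g" and i: "i \<le> n"
      and w: "set w \<subseteq> A" "\<pi> (val w) = g" "pen w = \<rho> g" for g p n i w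
  proof -
    have p_path: "\<forall>i\<le>n. p i \<in> carrier G" "p 0 = \<one>\<^bsub>G\<^esub>" "p n = g"
      using p unfolding geodesic_path_def by auto
    then have "g \<in> carrier G" by auto
    then have qg_w: "quasigeodesic G T L (word_path E \<pi> ev w) (length w)"
      using mono[OF qg[OF _ w, folded T_def]] lam unfolding L_def by simp
    have qg_p: "quasigeodesic G T L p n"
      using mono[OF G.geodesic_path_imp_quasigeodesic[OF T(1) p]] by (simp add: L_def)
    have "\<forall>j\<le>length w. word_path E \<pi> ev w j \<in> carrier G"
      using word_path_closed w by simp
    then have "\<exists>j\<le>length w. real (word_dist G T (p i) (word_path E \<pi> ev w j)) \<le> D"
      by (rule D[OF qg_p qg_w p_path(1) _ _ _ i]) (simp_all add: p_path w)
    then show ?thesis by blast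
  qed
  then show ?thesis using that unfolding T_def by blast
qed

lemma rho_quasi_multiplicative:
  assumes hyp: "word_hyperbolic G" and fin: "finite A" and C: "0 \<le> C" and lam: "lam > 0"
    and qg: "\<And>g w. g \<in> carrier G \<Longrightarrow> set w \<subseteq> A \<Longrightarrow> \<pi> (val w) = g \<Longrightarrow> pen w = \<rho> g \<Longrightarrow>
      quasigeodesic G (\<pi> ` ev ` A) lam (word_path E \<pi> ev w) (length w)"
  obtains D where "\<And>g h p n i k. g \<in> carrier G \<Longrightarrow> h \<in> carrier G \<Longrightarrow>
    geodesic_path G (\<pi> ` ev ` A) p n \<one>\<^bsub>G\<^esub> (g \<otimes>\<^bsub>G\<^esub> h) \<Longrightarrow> i \<le> n \<Longrightarrow>
    real (word_dist G (\<pi> ` ev ` A) g (p i)) \<le> k \<Longrightarrow>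
    real (word_dist E (ev ` A) (\<rho> (g \<otimes>\<^bsub>G\<^esub> h)) (\<rho> g \<otimes>\<^bsub>E\<^esub> \<rho> h))
      \<le> 2 * real_of_int C * (k + D) * real (word_length E (ev ` A) (\<iota> (- 1)))"
proof -
  interpret T: nat_metric "carrier G" "word_dist G (\<pi> ` ev ` A)"
    by (rule G.word_metric[OF sym_word_gen_G])
  obtain D where D: "\<And>g p n i w. geodesic_path G (\<pi> ` ev ` A) p n \<one>\<^bsub>G\<^esub> g \<Longrightarrow> i \<le> n \<Longrightarrow>
      set w \<subseteq> A \<Longrightarrow> \<pi> (val w) = g \<Longrightarrow> pen w = \<rho> g \<Longrightarrow>
      \<exists>j. real (word_dist G (\<pi> ` ev ` A) (p i) (word_path E \<pi> ev w j)) \<le> D"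
    using maximal_path_fellow_travels[OF hyp fin lam] qg by blast
  have "real (word_dist E (ev ` A) (\<rho> (g \<otimes>\<^bsub>G\<^esub> h)) (\<rho> g \<otimes>\<^bsub>E\<^esub> \<rho> h))
      \<le> 2 * real_of_int C * (k + D) * real (word_length E (ev ` A) (\<iota> (- 1)))"
    if gh: "g \<in> carrier G" "h \<in> carrier G" and p: "geodesic_path G (\<pi> ` ev ` A) p n \<one>\<^bsub>G\<^esub> (g \<otimes>\<^bsub>G\<^esub> h)"
      and i: "i \<le> n" "real (word_dist G (\<pi> ` ev ` A) g (p i)) \<le> k" for g h p n i k
  proof -
    have "g \<otimes>\<^bsub>G\<^esub> h \<in> carrier G" using gh by simp
    then obtain w where w: "set w \<subseteq> A" "\<pi> (val w) = g \<otimes>\<^bsub>G\<^esub> h" "pen w = \<rho> (g \<otimes>\<^bsub>G\<^esub> h)"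
      by (rule rho_attained)
    then obtain j where j: "real (word_dist G (\<pi> ` ev ` A) (p i) (word_path E \<pi> ev w j)) \<le> D"
      using D[OF p i(1)] by blast
    define q where "q = word_path E \<pi> ev w j"
    have qC: "q \<in> carrier G" unfolding q_def by (rule word_path_closed[OF w(1)])
    have piC: "p i \<in> carrier G" using p i unfolding geodesic_path_def by simp
    have "word_dist G (\<pi> ` ev ` A) q g
        \<le> word_dist G (\<pi> ` ev ` A) (p i) q + word_dist G (\<pi> ` ev ` A) g (p i)"
      using T.d_triangle[OF qC piC gh(1)] T.d_sym[OF qC piC] T.d_sym[OF piC gh(1)] by simp
    then have "real (word_dist G (\<pi> ` ev ` A) q g) \<le> k + D" using i j unfolding q_def by linarith
    then have "2 * real_of_int C * real (word_dist G (\<pi> ` ev ` A) q g)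
        \<le> 2 * real_of_int C * (k + D)"
      using C by (intro mult_left_mono) simp_all
    then have "2 * real_of_int C * real (word_dist G (\<pi> ` ev ` A) q g)
        * real (word_length E (ev ` A) (\<iota> (- 1)))
        \<le> 2 * real_of_int C * (k + D) * real (word_length E (ev ` A) (\<iota> (- 1)))"
      by (rule mult_right_mono) simp
    then show ?thesis using rho_mult_defect[OF gh w, of j] unfolding q_def by linarith
  qed
  then show ?thesis using that by blast
qed

end

theorem lemma3p2:
  fixes G :: "('g, 'a) monoid_scheme" and E :: "('e, 'b) monoid_scheme"
    and \<iota> :: "int \<Rightarrow> 'e" and \<pi> :: "'e \<Rightarrow> 'g"
    and A :: "'x set" and ev :: "'x \<Rightarrow> 'e"
    and C :: int and \<rho> :: "'g \<Rightarrow> 'e"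
  assumes hyp: "word_hyperbolic G"
    and ext: "central_extension G E \<iota> \<pi>"
    and gen: "finite A" "ev ` A \<subseteq> carrier E"
      "\<forall>x\<in>A. inv\<^bsub>E\<^esub> (ev x) \<in> ev ` A" "generate E (ev ` A) = carrier E"
    and C: "C > 0"
    and rho: "\<forall>g\<in>carrier G. is_fibre_max E \<iota> (candidates E \<iota> \<pi> C A ev g) (\<rho> g)"
    and qg: "\<exists>lam>0. \<forall>g\<in>carrier G. \<forall>w. set w \<subseteq> A \<and> \<pi> (word_prod E (map ev w)) = g
               \<and> penalized E \<iota> C ev w = \<rho> g
             \<longrightarrow> quasigeodesic G (\<pi> ` ev ` A) lam (word_path E \<pi> ev w) (length w)"
  shows "\<forall>k::real. \<exists>K::real. \<forall>g\<in>carrier G. \<forall>h\<in>carrier G.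
           (\<exists>p n i. geodesic_path G (\<pi> ` ev ` A) p n \<one>\<^bsub>G\<^esub> (g \<otimes>\<^bsub>G\<^esub> h) \<and> i \<le> n
                 \<and> real (word_dist G (\<pi> ` ev ` A) g (p i)) \<le> k)
           \<longrightarrow> real (word_dist E (ev ` A) (\<rho> (g \<otimes>\<^bsub>G\<^esub> h)) (\<rho> g \<otimes>\<^bsub>E\<^esub> \<rho> h)) \<le> K"
proof -
  interpret fibre_max_section G E \<iota> \<pi> A ev C \<rho>
    using ext gen(2-4) rho
    unfolding fibre_max_section_def fibre_max_section_axioms_def central_ext_def by blast
  obtain lam where "lam > 0" "\<And>g w. g \<in> carrier G \<Longrightarrow> set w \<subseteq> A \<Longrightarrow> \<pi> (val w) = g \<Longrightarrow>
      pen w = \<rho> g \<Longrightarrow> quasigeodesic G (\<pi> ` ev ` A) lam (word_path E \<pi> ev w) (length w)"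
    using qg by blast
  then obtain D where bound: "\<And>g h p n i k. g \<in> carrier G \<Longrightarrow> h \<in> carrier G \<Longrightarrow>
      geodesic_path G (\<pi> ` ev ` A) p n \<one>\<^bsub>G\<^esub> (g \<otimes>\<^bsub>G\<^esub> h) \<Longrightarrow> i \<le> n \<Longrightarrow>
      real (word_dist G (\<pi> ` ev ` A) g (p i)) \<le> k \<Longrightarrow>
      real (word_dist E (ev ` A) (\<rho> (g \<otimes>\<^bsub>G\<^esub> h)) (\<rho> g \<otimes>\<^bsub>E\<^esub> \<rho> h))
        \<le> 2 * real_of_int C * (k + D) * real (word_length E (ev ` A) (\<iota> (- 1)))"
    using rho_quasi_multiplicative[OF hyp gen(1)] C by (metis less_imp_le)
  show ?thesis by (intro allI exI ballI impI) (elim exE conjE, rule bound)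
qed

end
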